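(* For $K>K^*:=\frac{b\sigma_1}{b-\mu_0}$ let $R(K)$ denote the $R$-component of the unique equilibrium $G_3(K)=(S^*,I_1^*,0,0,R^* )$ with positive $S^*,I_1^*,R^*$ (so $R(K)$ is the unique root in $(0,S^{**}-\sigma_1)$ of $f(R,K)=\big(S^{**}-\sigma_1-R+\frac{K}{b}(\mu_0-\mu_4')\big)R+\frac{\rho_1}{\alpha_1}(S^{**}-\sigma_1-R)=0$, where $S^{**}=\frac{K}{b}(b-\mu_0)$). Then $K\mapsto R(K)$ is differentiable on $(K^*,\infty)$ and $$0<K\frac{dR}{dK}<\sigma_1+R(K).$$
   Context: Consider, for $t\ge0$, the system $S'=\big(b(1-\tfrac{N}{K})-\alpha_1I_1-\alpha_2I_2-(\beta_1+\beta_2+\alpha_3)I_{12}-\mu_0\big)S$, $I_1'=\big(b(1-\tfrac{N}{K})+\alpha_1S-\eta_1I_{12}-\gamma_1I_2-\mu_1\big)I_1+\beta_1SI_{12}$, $I_2'=\big(b(1-\tfrac{N}{K})+\alpha_2S-\eta_2I_{12}-\gamma_2I_1-\mu_2\big)I_2+\beta_2SI_{12}$, $I_{12}'=\big(b(1-\tfrac{N}{K})+\alpha_3S+\eta_1I_1+\eta_2I_2-\mu_3\big)I_{12}+(\gamma_1+\gamma_2)I_1I_2$, $R'=\big(b(1-\tfrac{N}{K})-\mu_4'\big)R+\rho_1I_1+\rho_2I_2+\rho_3I_{12}$, where $N=S+I_1+I_2+I_{12}+R$. All parameters $b,K,\alpha_i,\beta_i,\gamma_i,\eta_i,\rho_i,\mu_0,\mu_i'$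 are positive and $\mu_i=\rho_i+\mu_i'$ for $i=1,2,3$; $K$ is regarded as a varying parameter, the others fixed. Standing assumptions: $b>\mu_0$, $b>\mu_i$ ($i=1,2,3$), $b>\mu_4'$, and $\mu_0<\mu_4'<\mu_j'$ for $j=1,2,3$. Set $\sigma_k=(\mu_k-\mu_0)/\alpha_k$ ($k=1,2,3$), assumed to satisfy $\sigma_1<\sigma_2<\sigma_3$. *)

theory Defs
  imports "HOL-Analysis.Analysis"
begin

text \<open>Parameters of the model. mu1p, mu2p, mu3p, mu4p stand for mu_1', mu_2', mu_3', mu_4';
  the carrying capacity K is kept separate since it is the varying parameter.\<close>
record params =
  b :: real
  al1 :: real  al2 :: real  al3 :: real
  be1 :: real  be2 :: real
  ga1 :: real  ga2 :: real
  et1 :: real  et2 :: real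
  rh1 :: real  rh2 :: real  rh3 :: real
  mu0 :: real
  mu1p :: real  mu2p :: real  mu3p :: real  mu4p :: real

definition mu1 :: "params \<Rightarrow> real" where "mu1 p = rh1 p + mu1p p"
definition mu2 :: "params \<Rightarrow> real" where "mu2 p = rh2 p + mu2p p"
definition mu3 :: "params \<Rightarrow> real" where "mu3 p = rh3 p + mu3p p"

definition sigma1 :: "params \<Rightarrow> real" where "sigma1 p = (mu1 p - mu0 p) / al1 p"
definition sigma2 :: "params \<Rightarrow> real" where "sigma2 p = (mu2 p - mu0 p) / al2 p"
definition sigma3 :: "params \<Rightarrow> real" where "sigma3 p = (mu3 p - mu0 p) / al3 p"

definition field :: "params \<Rightarrow> real \<Rightarrow> real \<times> real \<times> real \<times> real \<times> real
                     \<Rightarrow> real \<times> real \<times> real \<times> real \<times> real" where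
  "field p K x = (case x of (S, I1, I2, I12, R) \<Rightarrow>
     (let N = S + I1 + I2 + I12 + R; g = b p * (1 - N / K) in
      ( (g - al1 p * I1 - al2 p * I2 - (be1 p + be2 p + al3 p) * I12 - mu0 p) * S,
        (g + al1 p * S - et1 p * I12 - ga1 p * I2 - mu1 p) * I1 + be1 p * S * I12,
        (g + al2 p * S - et2 p * I12 - ga2 p * I1 - mu2 p) * I2 + be2 p * S * I12,
        (g + al3 p * S + et1 p * I1 + et2 p * I2 - mu3 p) * I12 + (ga1 p + ga2 p) * I1 * I2,
        (g - mu4p p) * R + rh1 p * I1 + rh2 p * I2 + rh3 p * I12 )))"

definition is_G3 :: "params \<Rightarrow> real \<Rightarrow> real \<times> real \<times> real \<Rightarrow> bool" where
  "is_G3 p K y = (case y of (S, I1, R) \<Rightarrow>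
     S > 0 \<and> I1 > 0 \<and> R > 0 \<and> field p K (S, I1, 0, 0, R) = (0, 0, 0, 0, 0))"

definition RK :: "params \<Rightarrow> real \<Rightarrow> real" where
  "RK p K = (THE R. \<exists>S I1. is_G3 p K (S, I1, R))"

definition Kstar :: "params \<Rightarrow> real" where
  "Kstar p = b p * sigma1 p / (b p - mu0 p)"

definition standing_assumptions :: "params \<Rightarrow> bool" where
  "standing_assumptions p \<longleftrightarrow>
     b p > 0 \<and> al1 p > 0 \<and> al2 p > 0 \<and> al3 p > 0 \<and> be1 p > 0 \<and> be2 p > 0 \<and>
     ga1 p > 0 \<and> ga2 p > 0 \<and> et1 p > 0 \<and> et2 p > 0 \<and>
     rh1 p > 0 \<and> rh2 p > 0 \<and> rh3 p > 0 \<and> mu0 p > 0 \<and>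
     mu1p p > 0 \<and> mu2p p > 0 \<and> mu3p p > 0 \<and> mu4p p > 0 \<and>
     b p > mu0 p \<and> b p > mu1 p \<and> b p > mu2 p \<and> b p > mu3 p \<and> b p > mu4p p \<and>
     mu0 p < mu4p p \<and> mu4p p < mu1p p \<and> mu4p p < mu2p p \<and> mu4p p < mu3p p \<and>
     sigma1 p < sigma2 p \<and> sigma2 p < sigma3 p"

end

theory Submission
  imports Defs
begin

text \<open>At an equilibrium (S, I1, 0, 0, R) with S, I1 > 0 the S- and I1-equations force
  S + I1 = sigma1 and alpha1 I1 = b (1 - N/K) - mu0; substituting into the R-equation leaves
  the quadratic f(R, K) = 0, whose unique positive root R(K) is explicit. Differentiating
  f(R(K), K) = 0 and using the identity once more gives
  K R'(K) = (sigma1 + R)(R + rho1/alpha1) / sqrt(disc f), and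
  sqrt(disc f) > R + rho1/alpha1 because mu0 < mu4' makes the coefficient of K R in f negative.\<close>

definition quad_root :: "real \<Rightarrow> real \<Rightarrow> real \<Rightarrow> real" where
  "quad_root A c r = (A + c - r + sqrt ((A + c - r)\<^sup>2 + 4 * r * A)) / 2"

lemma quad_root_sqrt: "2 * quad_root A c r - (A + c - r) = sqrt ((A + c - r)\<^sup>2 + 4 * r * A)"
  by (simp add: quad_root_def field_simps)

lemma positive_root_iff_quad_root:
  fixes A c r R :: real
  assumes r: "r > 0" and A: "A > 0"
  shows "R > 0 \<and> (A - R + c) * R + r * (A - R) = 0 \<longleftrightarrow> R = quad_root A c r"
proof -
  define B where "B = A + c - r"
  have disc: "B\<^sup>2 + 4 * r * A > B\<^sup>2" using r A by simp
  have poly: "(A - R + c) * R + r * (A - R) = ((B\<^sup>2 + 4 * r * A) - (2 * R - B)\<^sup>2) / 4"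
    by (simp add: B_def algebra_simps power2_eq_square)
  show ?thesis
  proof
    assume "R > 0 \<and> (A - R + c) * R + r * (A - R) = 0"
    then have R: "R > 0" and sq: "(2 * R - B)\<^sup>2 = B\<^sup>2 + 4 * r * A" using poly by auto
    have "R * (2 * R - B) = R\<^sup>2 + r * A"
      using sq by (simp add: algebra_simps power2_eq_square)
    also have "\<dots> > 0" using r A R by (simp add: add_pos_pos)
    finally have "2 * R - B > 0" using R by (simp add: zero_less_mult_iff)
    then have "sqrt (B\<^sup>2 + 4 * r * A) = 2 * R - B" using sq by (intro real_sqrt_unique) simp_all
    then show "R = quad_root A c r" by (simp add: quad_root_def B_def)
  next
    assume R: "R = quad_root A c r"
    have "\<bar>B\<bar> < sqrt (B\<^sup>2 + 4 * r * A)"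
      using disc by (simp add: real_less_rsqrt)
    then have "R > 0" unfolding R quad_root_def B_def[symmetric] by (simp add: abs_less_iff)
    moreover have "2 * R - B = sqrt (B\<^sup>2 + 4 * r * A)" by (simp add: R B_def quad_root_sqrt)
    then have "(2 * R - B)\<^sup>2 = B\<^sup>2 + 4 * r * A" using disc by simp
    ultimately show "R > 0 \<and> (A - R + c) * R + r * (A - R) = 0" using poly by simp
  qed
qed

lemma quad_root_is_positive_root:
  fixes A c r :: real
  assumes "r > 0" and "A > 0"
  shows "quad_root A c r > 0"
    and "(A - quad_root A c r + c) * quad_root A c r + r * (A - quad_root A c r) = 0"
  using positive_root_iff_quad_root[OF assms] by blast+

lemma quad_root_bounds:
  fixes A c r :: real
  assumes r: "r > 0" and A: "A > 0" and c: "c < 0"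
  shows "A + c < quad_root A c r" "quad_root A c r < A"
proof -
  define R where "R = quad_root A c r"
  have R: "R > 0" and f: "(A - R + c) * R + r * (A - R) = 0"
    using quad_root_is_positive_root[OF r A] unfolding R_def by auto
  show RA: "R < A" unfolding R_def[symmetric]
  proof (rule ccontr)
    assume "\<not> R < A"
    then have "(A - R + c) * R < 0" and "r * (A - R) \<le> 0"
      using c R r by (simp_all add: mult_neg_pos mult_nonneg_nonpos)
    then show False using f by linarith
  qed
  have "r * (A - R) > 0" using RA r by simp
  then have "(A - R + c) * R < 0" using f by linarith
  then show "A + c < R" unfolding R_def[symmetric] using R by (simp add: mult_less_0_iff)
qed

lemma quad_root_has_real_derivative:
  fixes A C :: "real \<Rightarrow> real"
  assumes dA: "(A has_real_derivative A') (at x)" and dC: "(C has_real_derivative C') (at x)"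
    and r: "r > 0" and A: "A x > 0"
  defines "R \<equiv> quad_root (A x) (C x) r"
  shows "((\<lambda>x. quad_root (A x) (C x) r) has_real_derivative
           ((A' + C') * R + r * A') / (2 * R - (A x + C x - r))) (at x)"
proof -
  define B where "B = A x + C x - r"
  define s where "s = sqrt (B\<^sup>2 + 4 * r * A x)"
  have s: "s > 0" using r A unfolding s_def by (simp add: add_nonneg_pos)
  have sR: "2 * R - B = s" by (simp add: R_def B_def s_def quad_root_sqrt)
  have dB: "((\<lambda>x. A x + C x - r) has_real_derivative A' + C') (at x)"
    using dA dC by (auto intro!: derivative_eq_intros)
  have "((\<lambda>x. (A x + C x - r)\<^sup>2 + 4 * r * A x) has_real_derivative
          2 * B * (A' + C') + 4 * r * A') (at x)"
    using dA dC unfolding B_def by (auto intro!: derivative_eq_intros simp: algebra_simps)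
  from DERIV_chain2[OF DERIV_real_sqrt this] s
  have "((\<lambda>x. sqrt ((A x + C x - r)\<^sup>2 + 4 * r * A x)) has_real_derivative
               (2 * B * (A' + C') + 4 * r * A') / (2 * s)) (at x)"
    by (simp add: s_def B_def field_simps)
  from DERIV_cdivide[OF DERIV_add[OF dB this], of 2]
  have "((\<lambda>x. quad_root (A x) (C x) r) has_real_derivative
          ((A' + C') + (2 * B * (A' + C') + 4 * r * A') / (2 * s)) / 2) (at x)"
    by (simp add: quad_root_def)
  moreover have "((A' + C') + (2 * B * (A' + C') + 4 * r * A') / (2 * s)) / 2
               = ((A' + C') * R + r * A') / (2 * R - B)"
  proof -
    have R_eq: "R = (B + s) / 2" using sR by simp
    show ?thesis unfolding R_eq using s by (simp add: field_simps)
  qed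
  ultimately show ?thesis unfolding B_def by (rule DERIV_cong)
qed

lemma quad_root_elasticity_bounds:
  fixes A c r \<sigma> :: real
  assumes r: "r > 0" and A: "A > 0" and c: "c < 0" and \<sigma>: "\<sigma> > 0"
  defines "R \<equiv> quad_root A c r"
  shows "0 < ((A + \<sigma> + c) * R + r * (A + \<sigma>)) / (2 * R - (A + c - r))"
    and "((A + \<sigma> + c) * R + r * (A + \<sigma>)) / (2 * R - (A + c - r)) < \<sigma> + R"
proof -
  have R: "R > 0" and f: "(A - R + c) * R + r * (A - R) = 0"
    using quad_root_is_positive_root[OF r A] unfolding R_def by auto
  have "A + c < R" using quad_root_bounds[OF r A c] R_def by simp
  then have s: "2 * R - (A + c - r) > R + r" by simp
  have num: "(A + \<sigma> + c) * R + r * (A + \<sigma>) = (\<sigma> + R) * (R + r)"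
    using f by (simp add: algebra_simps)
  have pos: "(\<sigma> + R) * (R + r) > 0" using \<sigma> R r by simp
  have "(\<sigma> + R) * (R + r) < (\<sigma> + R) * (2 * R - (A + c - r))"
    using s \<sigma> R by (simp add: mult_strict_left_mono)
  then show "0 < ((A + \<sigma> + c) * R + r * (A + \<sigma>)) / (2 * R - (A + c - r))"
    and "((A + \<sigma> + c) * R + r * (A + \<sigma>)) / (2 * R - (A + c - r)) < \<sigma> + R"
    unfolding num using pos s R r by (simp_all add: divide_less_eq)
qed

text \<open>The paper's S** (the S-component of the disease-free equilibrium) and f(R, K).\<close>

definition Sss :: "params \<Rightarrow> real \<Rightarrow> real" where
  "Sss p K = K / b p * (b p - mu0 p)"

definition f_G3 :: "params \<Rightarrow> real \<Rightarrow> real \<Rightarrow> real" where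
  "f_G3 p R K = (Sss p K - sigma1 p - R + K / b p * (mu0 p - mu4p p)) * R
                + rh1 p / al1 p * (Sss p K - sigma1 p - R)"

definition G3_R :: "params \<Rightarrow> real \<Rightarrow> real" where
  "G3_R p K = quad_root (Sss p K - sigma1 p) (K / b p * (mu0 p - mu4p p)) (rh1 p / al1 p)"

definition G3_I1 :: "params \<Rightarrow> real \<Rightarrow> real" where
  "G3_I1 p K = b p / K * (Sss p K - sigma1 p - G3_R p K) / al1 p"

lemma is_G3_iff:
  assumes "al1 p > 0"
  shows "is_G3 p K (S, I1, R) \<longleftrightarrow>
           S > 0 \<and> I1 > 0 \<and> R > 0 \<and> S + I1 = sigma1 p \<and>
           al1 p * I1 = b p * (1 - (sigma1 p + R) / K) - mu0 p \<and>
           (mu0 p + al1 p * I1 - mu4p p) * R + rh1 p * I1 = 0"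
    (is "_ \<longleftrightarrow> ?rhs")
proof
  assume G: "is_G3 p K (S, I1, R)"
  define g where "g = b p * (1 - (S + I1 + R) / K)"
  have pos: "S > 0" "I1 > 0" "R > 0"
    and e1: "(g - al1 p * I1 - mu0 p) * S = 0" and e2: "(g + al1 p * S - mu1 p) * I1 = 0"
    and e5: "(g - mu4p p) * R + rh1 p * I1 = 0"
    using G unfolding is_G3_def field_def Let_def g_def by auto
  have gS: "g = mu0 p + al1 p * I1" and gI: "g = mu1 p - al1 p * S"
    using e1 e2 pos by simp_all
  have "al1 p * (S + I1) = mu1 p - mu0 p" using gS gI by (simp add: algebra_simps)
  then have SI: "S + I1 = sigma1 p" using assms by (simp add: sigma1_def field_simps)
  then have "g = b p * (1 - (sigma1 p + R) / K)" by (simp add: g_def add.assoc)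
  then show ?rhs using pos SI gS e5 by simp
next
  assume rhs: ?rhs
  define g where "g = b p * (1 - (S + I1 + R) / K)"
  have "g = b p * (1 - (sigma1 p + R) / K)" using rhs by (simp add: g_def add.assoc)
  then have gS: "g = mu0 p + al1 p * I1" using rhs by simp
  moreover have "al1 p * (S + I1) = mu1 p - mu0 p"
    using rhs assms by (simp add: sigma1_def)
  ultimately have gI: "g = mu1 p - al1 p * S" by (simp add: algebra_simps)
  have e5: "(g - mu4p p) * R + rh1 p * I1 = 0" unfolding gS using rhs by blast
  have "field p K (S, I1, 0, 0, R) = ((g - al1 p * I1 - mu0 p) * S, (g + al1 p * S - mu1 p) * I1,
          0, 0, (g - mu4p p) * R + rh1 p * I1)"
    by (simp add: field_def Let_def g_def)
  then have "field p K (S, I1, 0, 0, R) = (0, 0, 0, 0, 0)"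
    using gS gI e5 by simp
  then show "is_G3 p K (S, I1, R)" using rhs by (simp add: is_G3_def)
qed

lemma standing_assumptions_consequences:
  assumes "standing_assumptions p"
  shows "b p > 0" "al1 p > 0" "rh1 p > 0" "mu0 p < b p" "mu0 p < mu4p p" "mu4p p < mu1 p"
    "sigma1 p > 0" "Kstar p > 0"
  using assms by (auto simp: standing_assumptions_def mu1_def sigma1_def Kstar_def)

lemma Sss_gt_sigma1:
  assumes sa: "standing_assumptions p" and K: "K > Kstar p"
  shows "Sss p K > sigma1 p"
proof -
  note h = standing_assumptions_consequences[OF sa]
  have "b p * sigma1 p < K * (b p - mu0 p)"
    using K h by (simp add: Kstar_def pos_divide_less_eq)
  then show ?thesis using h by (simp add: Sss_def field_simps)
qed

lemma mu4p_coefficient_neg: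
  assumes "standing_assumptions p" and "K > 0"
  shows "K / b p * (mu0 p - mu4p p) < 0"
  using standing_assumptions_consequences[OF assms(1)] assms(2)
  by (intro mult_pos_neg) simp_all

lemma f_G3_positive_root_iff:
  assumes sa: "standing_assumptions p" and K: "K > Kstar p"
  shows "R > 0 \<and> f_G3 p R K = 0 \<longleftrightarrow> R = G3_R p K"
proof -
  note h = standing_assumptions_consequences[OF sa]
  have A: "Sss p K - sigma1 p > 0" using Sss_gt_sigma1[OF sa K] by simp
  have r: "rh1 p / al1 p > 0" using h by simp
  show ?thesis
    unfolding f_G3_def G3_R_def by (rule positive_root_iff_quad_root[OF r A])
qed

lemma G3_R_bounds:
  assumes sa: "standing_assumptions p" and K: "K > Kstar p"
  shows "0 < G3_R p K" "G3_R p K < Sss p K - sigma1 p"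
proof -
  note h = standing_assumptions_consequences[OF sa]
  have A: "Sss p K - sigma1 p > 0" using Sss_gt_sigma1[OF sa K] by simp
  have r: "rh1 p / al1 p > 0" using h by simp
  have c: "K / b p * (mu0 p - mu4p p) < 0" using mu4p_coefficient_neg[OF sa] h K by simp
  show "0 < G3_R p K" "G3_R p K < Sss p K - sigma1 p"
    using quad_root_is_positive_root(1)[OF r A] quad_root_bounds(2)[OF r A c]
    unfolding G3_R_def by simp_all
qed

lemma R_equation_iff_f_G3:
  assumes sa: "standing_assumptions p" and K: "K > 0"
    and I1: "al1 p * I1 = b p / K * (Sss p K - sigma1 p - R)"
  shows "(mu0 p + al1 p * I1 - mu4p p) * R + rh1 p * I1 = 0 \<longleftrightarrow> f_G3 p R K = 0"
proof -
  note h = standing_assumptions_consequences[OF sa]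
  have rh: "rh1 p * I1 = rh1 p / al1 p * (al1 p * I1)" using h by simp
  have "(mu0 p + al1 p * I1 - mu4p p) * R + rh1 p * I1
          = (mu0 p + b p / K * (Sss p K - sigma1 p - R) - mu4p p) * R
            + rh1 p / al1 p * (b p / K * (Sss p K - sigma1 p - R))"
    unfolding rh I1 ..
  also have "\<dots> = b p / K * f_G3 p R K"
    using h K by (simp add: f_G3_def Sss_def field_simps)
  finally show ?thesis using h K by simp
qed

lemma is_G3_iff_f_G3:
  assumes sa: "standing_assumptions p" and K: "K > 0"
  shows "is_G3 p K (S, I1, R) \<longleftrightarrow>
           S > 0 \<and> I1 > 0 \<and> R > 0 \<and> S + I1 = sigma1 p \<and>
           al1 p * I1 = b p / K * (Sss p K - sigma1 p - R) \<and> f_G3 p R K = 0"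
proof -
  note h = standing_assumptions_consequences[OF sa]
  have "b p * (1 - (sigma1 p + R) / K) - mu0 p = b p / K * (Sss p K - sigma1 p - R)"
    using h K by (simp add: Sss_def field_simps)
  then show ?thesis
    unfolding is_G3_iff[OF h(2)] using R_equation_iff_f_G3[OF sa K] by metis
qed

lemma G3_I1_bounds:
  assumes sa: "standing_assumptions p" and K: "K > Kstar p"
  shows "0 < G3_I1 p K" "G3_I1 p K < sigma1 p"
proof -
  note h = standing_assumptions_consequences[OF sa]
  define R where "R = G3_R p K"
  define I where "I = G3_I1 p K"
  define r where "r = rh1 p / al1 p"
  have K0: "K > 0" using K h by simp
  have R: "0 < R" "R < Sss p K - sigma1 p" using G3_R_bounds[OF sa K] by (simp_all add: R_def)
  have I: "al1 p * I = b p / K * (Sss p K - sigma1 p - R)"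
    using h by (simp add: I_def R_def G3_I1_def)
  have "0 < al1 p * I" unfolding I using h K0 R by simp
  then show "0 < G3_I1 p K" using h by (simp add: I_def zero_less_mult_iff)
  have "f_G3 p R K = 0" using f_G3_positive_root_iff[OF sa K] R_def by blast
  then have e5: "(mu0 p + al1 p * I - mu4p p) * R + rh1 p * I = 0"
    using R_equation_iff_f_G3[OF sa K0 I] by simp
  have "al1 p * I * (R + r) = al1 p * I * R + rh1 p * I"
    using h(2) by (simp add: r_def algebra_simps)
  also have "\<dots> = (mu4p p - mu0 p) * R"
    using e5 by (simp add: algebra_simps)
  also have "\<dots> < (mu1 p - mu0 p) * (R + r)"
    using h R by (simp add: r_def mult_strict_mono add_pos_pos)
  finally have "al1 p * I * (R + r) < (mu1 p - mu0 p) * (R + r)" .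
  moreover have "R + r > 0" using h R by (simp add: r_def add_pos_pos)
  ultimately have "al1 p * I < mu1 p - mu0 p" by (simp add: mult_less_cancel_right_pos)
  then show "G3_I1 p K < sigma1 p" using h(2) by (simp add: I_def sigma1_def field_simps)
qed

lemma is_G3_iff_explicit:
  assumes sa: "standing_assumptions p" and K: "K > Kstar p"
  shows "is_G3 p K y \<longleftrightarrow> y = (sigma1 p - G3_I1 p K, G3_I1 p K, G3_R p K)"
proof -
  note h = standing_assumptions_consequences[OF sa]
  have K0: "K > 0" using K h by simp
  have "al1 p * I1 = X \<longleftrightarrow> I1 = X / al1 p" for I1 X using h by (auto simp: field_simps)
  then have I1_iff: "al1 p * I1 = b p / K * (Sss p K - sigma1 p - G3_R p K) \<longleftrightarrow> I1 = G3_I1 p K"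
    for I1 unfolding G3_I1_def .
  have "is_G3 p K (S, I1, R) \<longleftrightarrow> R = G3_R p K \<and> I1 = G3_I1 p K \<and> S = sigma1 p - G3_I1 p K"
    for S I1 R
  proof
    assume G: "is_G3 p K (S, I1, R)"
    then have "R = G3_R p K"
      using is_G3_iff_f_G3[OF sa K0] f_G3_positive_root_iff[OF sa K] by blast
    then show "R = G3_R p K \<and> I1 = G3_I1 p K \<and> S = sigma1 p - G3_I1 p K"
      using G I1_iff unfolding is_G3_iff_f_G3[OF sa K0] by auto
  next
    assume "R = G3_R p K \<and> I1 = G3_I1 p K \<and> S = sigma1 p - G3_I1 p K"
    then show "is_G3 p K (S, I1, R)"
      unfolding is_G3_iff_f_G3[OF sa K0]
      using f_G3_positive_root_iff[OF sa K] I1_iff G3_I1_bounds[OF sa K] by auto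
  qed
  then show ?thesis by (cases y) auto
qed

lemma G3_R_has_derivative:
  assumes sa: "standing_assumptions p" and K: "K > Kstar p"
  obtains D where "(G3_R p has_real_derivative D) (at K)"
    and "0 < K * D" and "K * D < sigma1 p + G3_R p K"
proof -
  note h = standing_assumptions_consequences[OF sa]
  define A where "A = (\<lambda>K. Sss p K - sigma1 p)"
  define C where "C = (\<lambda>K. K / b p * (mu0 p - mu4p p))"
  define r where "r = rh1 p / al1 p"
  define a' where "a' = (b p - mu0 p) / b p"
  define c' where "c' = (mu0 p - mu4p p) / b p"
  define R where "R = G3_R p K"
  define D where "D = ((a' + c') * R + r * a') / (2 * R - (A K + C K - r))"
  have K0: "K > 0" using K h by simp
  have r: "r > 0" and A: "A K > 0" and c: "C K < 0"
    using h Sss_gt_sigma1[OF sa K] mu4p_coefficient_neg[OF sa K0]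
    by (simp_all add: A_def C_def r_def)
  have dA: "(A has_real_derivative a') (at K)" and dC: "(C has_real_derivative c') (at K)"
    unfolding A_def C_def Sss_def a'_def c'_def using h(1)
    by (auto intro!: derivative_eq_intros)
  have "G3_R p = (\<lambda>K. quad_root (A K) (C K) r)"
    by (simp add: fun_eq_iff G3_R_def A_def C_def r_def)
  then have "(G3_R p has_real_derivative D) (at K)"
    using quad_root_has_real_derivative[OF dA dC r A] by (simp add: D_def R_def)
  moreover have Ka: "K * a' = A K + sigma1 p" and Kc: "K * c' = C K"
    using h(1) by (simp_all add: a'_def c'_def A_def C_def Sss_def field_simps)
  have "K * D = ((K * a' + K * c') * R + r * (K * a')) / (2 * R - (A K + C K - r))"
    unfolding D_def times_divide_eq_right by (simp only: algebra_simps)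
  then have "K * D = ((A K + sigma1 p + C K) * R + r * (A K + sigma1 p))
                       / (2 * R - (A K + C K - r))"
    unfolding Ka Kc .
  then have "0 < K * D" and "K * D < sigma1 p + G3_R p K"
    using quad_root_elasticity_bounds[OF r A c h(7)]
    by (simp_all add: R_def G3_R_def A_def C_def r_def)
  ultimately show ?thesis using that by blast
qed

theorem proposition4:
  fixes p :: params
  assumes "standing_assumptions p"
  shows "(\<forall>K > Kstar p. \<exists>!y. is_G3 p K y) \<and>
         (\<forall>K > Kstar p. \<exists>D. (RK p has_real_derivative D) (at K) \<and>
                             0 < K * D \<and> K * D < sigma1 p + RK p K)"
proof -
  have RK: "RK p K = G3_R p K" if "K > Kstar p" for K
    using is_G3_iff_explicit[OF assms that] by (simp add: RK_def)
  have "\<exists>D. (RK p has_real_derivative D) (at K) \<and> 0 < K * D \<and> K * D < sigma1 p + RK p K"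
    if K: "K > Kstar p" for K
  proof -
    obtain D where dR: "(G3_R p has_real_derivative D) (at K)"
      and "0 < K * D" "K * D < sigma1 p + G3_R p K"
      using G3_R_has_derivative[OF assms K] .
    moreover have "(RK p has_real_derivative D) (at K)"
      by (rule has_field_derivative_transform_within_open[OF dR, of "{Kstar p<..}"])
         (use K RK in auto)
    ultimately show ?thesis using RK[OF K] by auto
  qed
  moreover have "\<exists>!y. is_G3 p K y" if "K > Kstar p" for K
    using is_G3_iff_explicit[OF assms that] by auto
  ultimately show ?thesis by blast
qed

end
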